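(* Let $B$ be an nbc basis of $M$ with $|\mathrm{IA}(B)|=k+1$. Write $B-\mathrm{IA}(B)=\{e_1>\cdots>e_{r-k}\}$ and $(E-B)-\min(E-B)=\{e_{r-k+1}<\cdots<e_{n-k-1}\}$. Define pairs $F_j|G_j$ for $1\le j\le n-k-1$ by \[ F_j|G_j=\begin{cases}\mathrm{cl}\{e_1,\dots,e_j\}\,|\,E & 1\le j\le r-k,\\ E\,|\,\mathrm{cl}^\perp\{e_j,e_{j+1},\dots,e_{n-k-1}\} & r-k+1\le j\le n-k-1.\end{cases} \] Then $\{F_1|G_1,\dots,F_{n-k-1}|G_{n-k-1}\}$ is a biflag of $M$ (the nbc biflag $\mathcal F(B)|\mathcal G(B)$).
   Context: Let $M$ be a matroid with no loops and no coloops on the ground set $E=\{0,1,\dots,n\}$, totally ordered by the usual order of integers, of rank $r+1$; its dual $M^\perp$ has rank $n-r$. Write $\mathrm{cl}$, $\mathrm{cl}^\perp$ for the closure operators of $M$, $M^\perp$. A biflat of $M$ is a pair $F|G$ where $F$ is a flat of $M$, $G$ is a flat of $M^\perp$, both are nonempty, they are not both equal to $E$, and $F\cup G=E$. Two biflats $F|G$, $F'|G'$ are compatible if ($F\subseteq F'$ and $G\supseteq G'$) or ($F\supseteq F'$ and $G\subseteq G'$). A biflag is a set of pairwise compatible biflats with $\bigcup_{F|G}(F\cap G)\neq E$. For a basis $B$ and $i\in B$, $C^\perp(B,i)$ is the unique cocircuit of $M$ contained in $(E-B)\cup i$ and containing $i$; for $i\notin B$, $C(B,i)$ is the unique circuit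 contained in $B\cup i$ and containing $i$. $\mathrm{IA}(B)=\{i\in B: i=\min C^\perp(B,i)\}$, $\mathrm{EA}(B)=\{i\notin B: i=\min C(B,i)\}$. $B$ is an nbc basis if $\mathrm{EA}(B)=\emptyset$. *)

theory Defs
  imports Main
begin

definition matroid_bases :: "'a set \<Rightarrow> 'a set set \<Rightarrow> bool" where
  "matroid_bases E Bs \<longleftrightarrow> finite E \<and> Bs \<noteq> {} \<and> (\<forall>B\<in>Bs. B \<subseteq> E) \<and>
     (\<forall>B1\<in>Bs. \<forall>B2\<in>Bs. \<forall>x\<in>B1 - B2. \<exists>y\<in>B2 - B1. insert y (B1 - {x}) \<in> Bs)"

definition indep :: "'a set set \<Rightarrow> 'a set \<Rightarrow> bool" where
  "indep Bs X \<longleftrightarrow> (\<exists>B\<in>Bs. X \<subseteq> B)"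

definition rk :: "'a set set \<Rightarrow> 'a set \<Rightarrow> nat" where
  "rk Bs X = Max {card Y | Y. Y \<subseteq> X \<and> indep Bs Y}"

definition cl :: "'a set \<Rightarrow> 'a set set \<Rightarrow> 'a set \<Rightarrow> 'a set" where
  "cl E Bs X = {x \<in> E. rk Bs (insert x X) = rk Bs X}"

definition is_flat :: "'a set \<Rightarrow> 'a set set \<Rightarrow> 'a set \<Rightarrow> bool" where
  "is_flat E Bs F \<longleftrightarrow> F \<subseteq> E \<and> cl E Bs F = F"

definition dual_bases :: "'a set \<Rightarrow> 'a set set \<Rightarrow> 'a set set" where
  "dual_bases E Bs = (\<lambda>B. E - B) ` Bs"

definition is_circuit :: "'a set \<Rightarrow> 'a set set \<Rightarrow> 'a set \<Rightarrow> bool" where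
  "is_circuit E Bs C \<longleftrightarrow> C \<subseteq> E \<and> \<not> indep Bs C \<and> (\<forall>x\<in>C. indep Bs (C - {x}))"

definition is_cocircuit :: "'a set \<Rightarrow> 'a set set \<Rightarrow> 'a set \<Rightarrow> bool" where
  "is_cocircuit E Bs C \<longleftrightarrow> is_circuit E (dual_bases E Bs) C"

definition is_loop :: "'a set \<Rightarrow> 'a set set \<Rightarrow> 'a \<Rightarrow> bool" where
  "is_loop E Bs x \<longleftrightarrow> x \<in> E \<and> (\<forall>B\<in>Bs. x \<notin> B)"

definition is_coloop :: "'a set \<Rightarrow> 'a set set \<Rightarrow> 'a \<Rightarrow> bool" where
  "is_coloop E Bs x \<longleftrightarrow> x \<in> E \<and> (\<forall>B\<in>Bs. x \<in> B)"

text \<open>Fundamental circuit C(B,i) (i not in B) and fundamental cocircuit C-perp(B,i) (i in B).\<close>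
definition fund_circuit :: "'a set \<Rightarrow> 'a set set \<Rightarrow> 'a set \<Rightarrow> 'a \<Rightarrow> 'a set" where
  "fund_circuit E Bs B i = (THE C. is_circuit E Bs C \<and> C \<subseteq> insert i B \<and> i \<in> C)"

definition fund_cocircuit :: "'a set \<Rightarrow> 'a set set \<Rightarrow> 'a set \<Rightarrow> 'a \<Rightarrow> 'a set" where
  "fund_cocircuit E Bs B i = (THE C. is_cocircuit E Bs C \<and> C \<subseteq> insert i (E - B) \<and> i \<in> C)"

definition IA :: "'a::linorder set \<Rightarrow> 'a set set \<Rightarrow> 'a set \<Rightarrow> 'a set" where
  "IA E Bs B = {i \<in> B. i = Min (fund_cocircuit E Bs B i)}"

definition EA :: "'a::linorder set \<Rightarrow> 'a set set \<Rightarrow> 'a set \<Rightarrow> 'a set" where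
  "EA E Bs B = {i \<in> E - B. i = Min (fund_circuit E Bs B i)}"

definition nbc_basis :: "'a::linorder set \<Rightarrow> 'a set set \<Rightarrow> 'a set \<Rightarrow> bool" where
  "nbc_basis E Bs B \<longleftrightarrow> B \<in> Bs \<and> EA E Bs B = {}"

definition is_biflat :: "'a set \<Rightarrow> 'a set set \<Rightarrow> 'a set \<times> 'a set \<Rightarrow> bool" where
  "is_biflat E Bs FG \<longleftrightarrow> (case FG of (F, G) \<Rightarrow>
     is_flat E Bs F \<and> is_flat E (dual_bases E Bs) G \<and> F \<noteq> {} \<and> G \<noteq> {} \<and>
     \<not> (F = E \<and> G = E) \<and> F \<union> G = E)"

definition compatible :: "'a set \<times> 'a set \<Rightarrow> 'a set \<times> 'a set \<Rightarrow> bool" where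
  "compatible FG FG' \<longleftrightarrow> (case FG of (F, G) \<Rightarrow> case FG' of (F', G') \<Rightarrow>
     (F \<subseteq> F' \<and> G' \<subseteq> G) \<or> (F' \<subseteq> F \<and> G \<subseteq> G'))"

definition is_biflag :: "'a set \<Rightarrow> 'a set set \<Rightarrow> ('a set \<times> 'a set) set \<Rightarrow> bool" where
  "is_biflag E Bs S \<longleftrightarrow> (\<forall>FG\<in>S. is_biflat E Bs FG) \<and>
     (\<forall>FG\<in>S. \<forall>FG'\<in>S. compatible FG FG') \<and>
     (\<Union>(F, G)\<in>S. F \<inter> G) \<noteq> E"

end

(* The element m = min (E - B) lies in no F_j \<inter> G_j. The sets spanning the dual
   flats G_j lie in the cobasis E - B - {m}, which together with m is independent in the dual, so m
   is not in their dual closure. For the flats F_j, suppose m is in the closure of a set X of basis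
   elements that are not internally active. Then the fundamental circuit C(B, m) lies in X + m, and
   since B is nbc its minimum i is not m, so i is an element of X. As i < m, i is smaller than every
   element of E - B and hence the minimum of its fundamental cocircuit, i.e. internally active: a
   contradiction. Compatibility holds because the F_j increase and the G_j decrease with j. *)

theory Submission
  imports Defs
begin

lemma nth_sorted_list_of_set_mem: "finite A \<Longrightarrow> i < card A \<Longrightarrow> sorted_list_of_set A ! i \<in> A"
  by (metis length_sorted_list_of_set nth_mem set_sorted_list_of_set)

lemma nth_rev_sorted_list_of_set_mem:
  "finite A \<Longrightarrow> i < card A \<Longrightarrow> rev (sorted_list_of_set A) ! i \<in> A"
  by (metis length_rev length_sorted_list_of_set nth_mem set_rev set_sorted_list_of_set)

lemma card_insert_Diff_singleton:
  assumes "finite A" "x \<in> A" "y \<notin> A"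
  shows "card (insert y (A - {x})) = card A"
  using assms by (metis Diff_iff card_Suc_Diff1 card_insert_disjoint finite_Diff)

section \<open>Bases, independence and rank\<close>

locale matroid =
  fixes E :: "'a set" and Bs :: "'a set set"
  assumes bases: "matroid_bases E Bs"
begin

lemma finite_ground: "finite E"
  using bases by (simp add: matroid_bases_def)

lemma bases_nonempty: "Bs \<noteq> {}"
  using bases by (simp add: matroid_bases_def)

lemma basis_subset: "B \<in> Bs \<Longrightarrow> B \<subseteq> E"
  using bases by (auto simp add: matroid_bases_def)

lemma finite_basis: "B \<in> Bs \<Longrightarrow> finite B"
  using basis_subset finite_ground finite_subset by blast

lemma basis_exchange:
  "B1 \<in> Bs \<Longrightarrow> B2 \<in> Bs \<Longrightarrow> x \<in> B1 - B2 \<Longrightarrow> \<exists>y\<in>B2 - B1. insert y (B1 - {x}) \<in> Bs"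
  using bases unfolding matroid_bases_def by blast

lemma card_bases_eq:
  assumes "B1 \<in> Bs" and B2: "B2 \<in> Bs"
  shows "card B1 = card B2"
  using assms(1)
proof (induction "card (B1 - B2)" arbitrary: B1)
  case 0
  then have "B1 \<subseteq> B2"
    using finite_basis by auto
  moreover have "B2 \<subseteq> B1"
    using basis_exchange[OF B2 \<open>B1 \<in> Bs\<close>] \<open>B1 \<subseteq> B2\<close> by blast
  ultimately show ?case by simp
next
  case (Suc d)
  then obtain x where x: "x \<in> B1 - B2"
    by (metis card.empty ex_in_conv nat.distinct(1))
  then obtain y where y: "y \<in> B2 - B1" and B1': "insert y (B1 - {x}) \<in> Bs"
    using basis_exchange[OF \<open>B1 \<in> Bs\<close> B2] by blast
  have "insert y (B1 - {x}) - B2 = (B1 - B2) - {x}"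
    using y by blast
  then have "d = card (insert y (B1 - {x}) - B2)"
    using Suc.hyps(2) x finite_basis[OF \<open>B1 \<in> Bs\<close>] by simp
  then have "card (insert y (B1 - {x})) = card B2"
    using Suc.hyps(1) B1' by blast
  moreover have "card (insert y (B1 - {x})) = card B1"
    using card_insert_Diff_singleton[OF finite_basis[OF \<open>B1 \<in> Bs\<close>]] x y by blast
  ultimately show ?case by simp
qed

lemma indep_subset: "indep Bs Y \<Longrightarrow> X \<subseteq> Y \<Longrightarrow> indep Bs X"
  unfolding indep_def by blast

lemma indep_subset_ground: "indep Bs Y \<Longrightarrow> Y \<subseteq> E"
  unfolding indep_def using basis_subset by blast

lemma finite_indep: "indep Bs Y \<Longrightarrow> finite Y"
  using indep_subset_ground finite_ground finite_subset by blast

lemma indep_empty: "indep Bs {}"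
  using bases_nonempty unfolding indep_def by blast

lemma indep_basis: "B \<in> Bs \<Longrightarrow> indep Bs B"
  unfolding indep_def by blast

lemma card_indep_le_basis:
  assumes "indep Bs Y" "B \<in> Bs"
  shows "card Y \<le> card B"
proof -
  obtain B' where "B' \<in> Bs" "Y \<subseteq> B'"
    using assms(1) unfolding indep_def by blast
  then have "card Y \<le> card B'"
    by (simp add: card_mono finite_basis)
  then show ?thesis
    using card_bases_eq[OF \<open>B' \<in> Bs\<close> assms(2)] by simp
qed

lemma indep_card_basis_imp_basis:
  assumes "indep Bs Y" "B \<in> Bs" "card Y = card B"
  shows "Y \<in> Bs"
proof -
  obtain B' where "B' \<in> Bs" "Y \<subseteq> B'"
    using assms(1) unfolding indep_def by blast
  moreover have "card Y = card B'"
    using card_bases_eq[OF \<open>B' \<in> Bs\<close> assms(2)] assms(3) by simp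
  ultimately show ?thesis
    using card_subset_eq finite_basis by metis
qed

lemma indep_augment:
  assumes I: "indep Bs I" and J: "indep Bs J" and lt: "card I < card J"
  shows "\<exists>x\<in>J - I. indep Bs (insert x I)"
proof (rule ccontr)
  assume no_aug: "\<not> ?thesis"
  obtain BJ where BJ: "BJ \<in> Bs" "J \<subseteq> BJ"
    using J unfolding indep_def by blast
  obtain B0 where "B0 \<in> Bs" "I \<subseteq> B0"
    using I unfolding indep_def by blast
  \<comment> \<open>a basis through I as close to BJ as possible\<close>
  then obtain BI where BI: "BI \<in> Bs" "I \<subseteq> BI"
    and closest: "\<And>B'. B' \<in> Bs \<Longrightarrow> I \<subseteq> B' \<Longrightarrow> card (BJ - BI) \<le> card (BJ - B')"
    using ex_has_least_nat[of "\<lambda>B'. B' \<in> Bs \<and> I \<subseteq> B'" B0 "\<lambda>B'. card (BJ - B')"] by blast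
  have "BI - I \<subseteq> BJ"
  proof
    fix x assume x: "x \<in> BI - I"
    show "x \<in> BJ"
    proof (rule ccontr)
      assume "x \<notin> BJ"
      then obtain y where y: "y \<in> BJ - BI" "insert y (BI - {x}) \<in> Bs"
        using basis_exchange[OF BI(1) BJ(1)] x by blast
      have "card (BJ - BI) \<le> card (BJ - insert y (BI - {x}))"
        using closest[OF y(2)] BI x by blast
      moreover have "BJ - insert y (BI - {x}) \<subset> BJ - BI"
        using y \<open>x \<notin> BJ\<close> by blast
      then have "card (BJ - insert y (BI - {x})) < card (BJ - BI)"
        using finite_basis[OF BJ(1)] by (simp add: psubset_card_mono)
      ultimately show False
        by simp
    qed
  qed
  moreover have "x \<notin> BI" if "x \<in> J - I" for x
    using no_aug that BI unfolding indep_def by blast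
  ultimately have "BI \<subseteq> I \<union> (BJ - J)"
    by blast
  then have "card BI \<le> card (I \<union> (BJ - J))"
    using finite_basis[OF BJ(1)] finite_indep[OF I] by (simp add: card_mono)
  then have "card BI \<le> card I + card (BJ - J)"
    using card_Un_le order_trans by blast
  moreover have "card (BJ - J) = card BJ - card J" "card J \<le> card BJ"
    using BJ finite_basis[OF BJ(1)] by (simp_all add: card_Diff_subset finite_subset card_mono)
  moreover have "card BI = card BJ"
    using BI BJ card_bases_eq by blast
  ultimately show False
    using lt by linarith
qed

lemma finite_indep_cards: "finite {card Y | Y. Y \<subseteq> X \<and> indep Bs Y}"
proof -
  obtain B0 where "B0 \<in> Bs"
    using bases_nonempty by blast
  then have "{card Y | Y. Y \<subseteq> X \<and> indep Bs Y} \<subseteq> {..card B0}"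
    using card_indep_le_basis by auto
  then show ?thesis
    using finite_subset by blast
qed

lemma rk_ge: "Y \<subseteq> X \<Longrightarrow> indep Bs Y \<Longrightarrow> card Y \<le> rk Bs X"
  unfolding rk_def by (rule Max_ge[OF finite_indep_cards]) auto

lemma rk_witness: obtains Y where "Y \<subseteq> X" "indep Bs Y" "card Y = rk Bs X"
proof -
  have "{card Y | Y. Y \<subseteq> X \<and> indep Bs Y} \<noteq> {}"
    using indep_empty by blast
  then have "rk Bs X \<in> {card Y | Y. Y \<subseteq> X \<and> indep Bs Y}"
    unfolding rk_def by (rule Max_in[OF finite_indep_cards])
  then obtain Y where "rk Bs X = card Y" "Y \<subseteq> X" "indep Bs Y"
    by blast
  then show ?thesis
    using that by simp
qed

lemma rk_indep:
  assumes "indep Bs X"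
  shows "rk Bs X = card X"
proof -
  obtain Y where "Y \<subseteq> X" "card Y = rk Bs X"
    using rk_witness by blast
  then have "rk Bs X \<le> card X"
    using card_mono[OF finite_indep[OF assms], of Y] by simp
  then show ?thesis
    using rk_ge[OF order_refl assms] by simp
qed

lemma rk_mono:
  assumes "X \<subseteq> Y"
  shows "rk Bs X \<le> rk Bs Y"
proof -
  obtain Z where "Z \<subseteq> X" "indep Bs Z" "card Z = rk Bs X"
    using rk_witness by blast
  then show ?thesis
    using rk_ge[of Z Y] assms by simp
qed

lemma indep_extend_to_rk:
  assumes I: "indep Bs I" "I \<subseteq> X"
  obtains W where "I \<subseteq> W" "W \<subseteq> X" "indep Bs W" "card W = rk Bs X"
proof -
  let ?P = "\<lambda>W. I \<subseteq> W \<and> W \<subseteq> X \<and> indep Bs W"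
  obtain W where W: "?P W" and maximal: "\<And>W'. ?P W' \<Longrightarrow> rk Bs X - card W \<le> rk Bs X - card W'"
    using ex_has_least_nat[of ?P I "\<lambda>W. rk Bs X - card W"] I by blast
  obtain J where J: "J \<subseteq> X" "indep Bs J" "card J = rk Bs X"
    using rk_witness by blast
  have W_le: "card W \<le> rk Bs X"
    using rk_ge W by simp
  have "\<not> card W < card J"
  proof
    assume "card W < card J"
    then obtain x where x: "x \<in> J - W" "indep Bs (insert x W)"
      using indep_augment W J by blast
    then have "?P (insert x W)"
      using W J by blast
    moreover have "card (insert x W) = Suc (card W)"
      using x finite_indep[of W] W by simp
    ultimately show False
      using maximal[of "insert x W"] W_le \<open>card W < card J\<close> J by simp
  qed
  then have "card W = rk Bs X"
    using J W_le by simp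
  then show ?thesis
    using that W by blast
qed

section \<open>Closure and flats\<close>

lemma mem_cl_iff: "x \<in> cl E Bs X \<longleftrightarrow> x \<in> E \<and> rk Bs (insert x X) = rk Bs X"
  unfolding cl_def by simp

lemma cl_subset_ground: "cl E Bs X \<subseteq> E"
  unfolding cl_def by blast

lemma subset_cl: "X \<subseteq> E \<Longrightarrow> X \<subseteq> cl E Bs X"
  unfolding cl_def by (auto simp: insert_absorb)

lemma cl_mono:
  assumes XY: "X \<subseteq> Y"
  shows "cl E Bs X \<subseteq> cl E Bs Y"
proof
  fix x assume "x \<in> cl E Bs X"
  then have xE: "x \<in> E" and rk_x: "rk Bs (insert x X) = rk Bs X"
    unfolding cl_def by auto
  have "\<not> rk Bs Y < rk Bs (insert x Y)"
  proof
    assume lt: "rk Bs Y < rk Bs (insert x Y)"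
    obtain Y' where Y': "Y' \<subseteq> X" "indep Bs Y'" "card Y' = rk Bs X"
      using rk_witness by blast
    obtain W where W: "Y' \<subseteq> W" "W \<subseteq> Y" "indep Bs W" "card W = rk Bs Y"
      using indep_extend_to_rk[of Y' Y] Y' XY by blast
    obtain Z where Z: "Z \<subseteq> insert x Y" "indep Bs Z" "card Z = rk Bs (insert x Y)"
      using rk_witness by blast
    obtain z where z: "z \<in> Z - W" "indep Bs (insert z W)"
      using indep_augment[of W Z] W Z lt by auto
    have card_zW: "card (insert z W) = rk Bs Y + 1"
      using z W finite_indep by simp
    show False
    proof (cases "z \<in> Y")
      case True
      then show False
        using rk_ge[of "insert z W" Y] z W card_zW by simp
    next
      case False
      then have "z = x" "x \<notin> Y'"
        using z Z W by auto
      then have "indep Bs (insert x Y')"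
        using indep_subset[OF z(2), of "insert x Y'"] W by blast
      moreover have "card (insert x Y') = rk Bs X + 1"
        using \<open>x \<notin> Y'\<close> Y' finite_indep by simp
      ultimately show False
        using rk_ge[of "insert x Y'" "insert x X"] Y' rk_x by auto
    qed
  qed
  moreover have "rk Bs Y \<le> rk Bs (insert x Y)"
    by (rule rk_mono) blast
  ultimately have "rk Bs (insert x Y) = rk Bs Y"
    by simp
  then show "x \<in> cl E Bs Y"
    using xE unfolding cl_def by simp
qed

lemma rk_cl: "X \<subseteq> E \<Longrightarrow> rk Bs (cl E Bs X) = rk Bs X"
proof -
  assume XE: "X \<subseteq> E"
  have "\<not> rk Bs X < rk Bs (cl E Bs X)"
  proof
    assume lt: "rk Bs X < rk Bs (cl E Bs X)"
    obtain Y where Y: "Y \<subseteq> X" "indep Bs Y" "card Y = rk Bs X"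
      using rk_witness by blast
    obtain Z where Z: "Z \<subseteq> cl E Bs X" "indep Bs Z" "card Z = rk Bs (cl E Bs X)"
      using rk_witness by blast
    obtain z where z: "z \<in> Z - Y" "indep Bs (insert z Y)"
      using indep_augment[of Y Z] Y Z lt by auto
    then have "rk Bs (insert z X) = rk Bs X"
      using Z unfolding cl_def by blast
    moreover have "card (insert z Y) = rk Bs X + 1"
      using z Y finite_indep by simp
    ultimately show False
      using rk_ge[of "insert z Y" "insert z X"] Y z by auto
  qed
  then show ?thesis
    using rk_mono[OF subset_cl[OF XE]] by simp
qed

lemma cl_idem: "X \<subseteq> E \<Longrightarrow> cl E Bs (cl E Bs X) = cl E Bs X"
proof
  assume XE: "X \<subseteq> E"
  show "cl E Bs (cl E Bs X) \<subseteq> cl E Bs X"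
  proof
    fix x assume "x \<in> cl E Bs (cl E Bs X)"
    then have "x \<in> E" "rk Bs (insert x (cl E Bs X)) = rk Bs X"
      using rk_cl[OF XE] by (simp_all add: mem_cl_iff)
    moreover have "rk Bs (insert x X) \<le> rk Bs (insert x (cl E Bs X))"
      using rk_mono subset_cl[OF XE] by (meson insert_mono)
    moreover have "rk Bs X \<le> rk Bs (insert x X)"
      by (rule rk_mono) blast
    ultimately show "x \<in> cl E Bs X"
      by (simp add: mem_cl_iff)
  qed
qed (use subset_cl cl_subset_ground in blast)

lemma is_flat_cl: "X \<subseteq> E \<Longrightarrow> is_flat E Bs (cl E Bs X)"
  unfolding is_flat_def using cl_subset_ground cl_idem by blast

lemma is_flat_ground: "is_flat E Bs E"
  unfolding is_flat_def cl_def by (auto simp: insert_absorb)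

lemma notin_cl_if_indep:
  assumes "indep Bs (insert x X)" "x \<notin> X"
  shows "x \<notin> cl E Bs X"
proof -
  have "indep Bs X"
    using indep_subset[OF assms(1)] by blast
  then have "rk Bs (insert x X) = Suc (rk Bs X)"
    using rk_indep assms finite_indep by simp
  then show ?thesis
    by (simp add: mem_cl_iff)
qed

end

section \<open>Circuits and the dual matroid\<close>

context matroid
begin

lemma circuit_exists:
  assumes X: "X \<subseteq> E" "\<not> indep Bs X"
  obtains C where "C \<subseteq> X" "is_circuit E Bs C"
proof -
  let ?P = "\<lambda>D. D \<subseteq> X \<and> \<not> indep Bs D"
  have "?P X"
    using X by simp
  then obtain C where C: "?P C" and least: "\<And>D. ?P D \<Longrightarrow> card C \<le> card D"
    using ex_has_least_nat[of ?P X card] by blast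
  have "indep Bs (C - {x})" if "x \<in> C" for x
  proof (rule ccontr)
    assume "\<not> indep Bs (C - {x})"
    then have "card C \<le> card (C - {x})"
      using least[of "C - {x}"] C by blast
    moreover have "finite C"
      using C X by (blast intro: finite_subset[OF _ finite_ground])
    ultimately show False
      using card_Diff1_less[of C x] that by simp
  qed
  then show ?thesis
    using that C X unfolding is_circuit_def by blast
qed

lemma circuit_not_subset_basis: "is_circuit E Bs C \<Longrightarrow> B \<in> Bs \<Longrightarrow> \<not> C \<subseteq> B"
  using indep_basis indep_subset unfolding is_circuit_def by blast

lemma basis_change:
  assumes B: "B \<in> Bs" and xB: "x \<notin> B" and C: "is_circuit E Bs C" "C \<subseteq> insert x B"
    and yC: "y \<in> C" and yB: "y \<in> B"
  shows "insert x (B - {y}) \<in> Bs"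
proof -
  obtain Z where Z: "Z \<subseteq> insert x B" "indep Bs Z" "card Z = rk Bs (insert x B)"
    using rk_witness by blast
  have "rk Bs (insert x B) = card B"
    using card_indep_le_basis[OF Z(2) B] rk_ge[OF subset_insertI[of B x] indep_basis[OF B]] Z(3)
    by simp
  moreover have "indep Bs (C - {y})"
    using C yC unfolding is_circuit_def by blast
  ultimately obtain W where W: "C - {y} \<subseteq> W" "W \<subseteq> insert x B" "indep Bs W" "card W = card B"
    using indep_extend_to_rk[of "C - {y}" "insert x B"] C by auto
  have "\<not> C \<subseteq> W"
    using W C indep_subset unfolding is_circuit_def by blast
  then have "y \<notin> W"
    using W by blast
  then have sub: "W \<subseteq> insert x (B - {y})"
    using W by blast
  have "card (insert x (B - {y})) = card B"
    using card_insert_Diff_singleton[OF finite_basis[OF B] yB xB] .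
  then have "W = insert x (B - {y})"
    using card_subset_eq[OF _ sub] W(4) finite_basis[OF B] by simp
  then show ?thesis
    using indep_card_basis_imp_basis W B by metis
qed

text \<open>A circuit inside B + x consists of x and those b \<in> B for which B - b + x is again a basis.\<close>

lemma circuit_unique:
  assumes B: "B \<in> Bs"
    and C1: "is_circuit E Bs C1" "C1 \<subseteq> insert x B" "x \<in> C1"
    and C2: "is_circuit E Bs C2" "C2 \<subseteq> insert x B"
  shows "C1 = C2"
proof -
  have xB: "x \<notin> B"
    using C1 circuit_not_subset_basis[OF C1(1) B] by blast
  have exchange_iff: "b \<in> C \<longleftrightarrow> insert x (B - {b}) \<in> Bs"
    if C: "is_circuit E Bs C" "C \<subseteq> insert x B" and b: "b \<in> B" for C b
  proof
    assume "insert x (B - {b}) \<in> Bs"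
    then show "b \<in> C"
      using circuit_not_subset_basis[OF C(1)] C(2) by blast
  qed (use basis_change B xB C b in blast)
  have "C1 \<inter> B = C2 \<inter> B"
    using exchange_iff C1 C2 by blast
  moreover have "x \<in> C2"
    using C2 circuit_not_subset_basis[OF C2(1) B] by blast
  ultimately show ?thesis
    using C1 C2 by blast
qed

lemma fund_circuit_eq:
  assumes "B \<in> Bs" "is_circuit E Bs C" "C \<subseteq> insert x B" "x \<in> C"
  shows "fund_circuit E Bs B x = C"
  unfolding fund_circuit_def
  using assms circuit_unique by (intro the1_equality) blast+

lemma fund_circuit:
  assumes B: "B \<in> Bs" and x: "x \<in> E" "x \<notin> B"
  shows "is_circuit E Bs (fund_circuit E Bs B x)" "fund_circuit E Bs B x \<subseteq> insert x B"
    "x \<in> fund_circuit E Bs B x"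
proof -
  have "\<not> indep Bs (insert x B)"
  proof
    assume "indep Bs (insert x B)"
    then have "card (insert x B) \<le> card B"
      using card_indep_le_basis[OF _ B] by blast
    then show False
      using x finite_basis[OF B] by simp
  qed
  moreover have "insert x B \<subseteq> E"
    using basis_subset[OF B] x by blast
  ultimately obtain C where C: "C \<subseteq> insert x B" "is_circuit E Bs C"
    using circuit_exists by blast
  moreover have "x \<in> C"
    using C circuit_not_subset_basis[OF C(2) B] by blast
  ultimately have "fund_circuit E Bs B x = C"
    using fund_circuit_eq[OF B] by blast
  then show "is_circuit E Bs (fund_circuit E Bs B x)" "fund_circuit E Bs B x \<subseteq> insert x B"
    "x \<in> fund_circuit E Bs B x"
    using C \<open>x \<in> C\<close> by simp_all
qed

lemma fund_circuit_subset_if_in_cl: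
  assumes B: "B \<in> Bs" and X: "X \<subseteq> B" and x: "x \<in> cl E Bs X" "x \<notin> B"
  shows "fund_circuit E Bs B x \<subseteq> insert x X"
proof -
  have "\<not> indep Bs (insert x X)"
    using notin_cl_if_indep x X by blast
  moreover have "insert x X \<subseteq> E"
    using x X basis_subset[OF B] cl_subset_ground by blast
  ultimately obtain C where C: "C \<subseteq> insert x X" "is_circuit E Bs C"
    using circuit_exists by blast
  moreover have "x \<in> C"
    using C X circuit_not_subset_basis[OF C(2) B] by blast
  moreover have "C \<subseteq> insert x B"
    using C X by blast
  ultimately show ?thesis
    using fund_circuit_eq[OF B] by simp
qed

lemma matroid_dual: "matroid E (dual_bases E Bs)"
  unfolding matroid_def matroid_bases_def
proof (intro conjI ballI)
  show "finite E" "dual_bases E Bs \<noteq> {}"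
    using finite_ground bases_nonempty unfolding dual_bases_def by auto
  show "D \<subseteq> E" if "D \<in> dual_bases E Bs" for D
    using that unfolding dual_bases_def by blast
next
  fix D1 D2 x
  assume "D1 \<in> dual_bases E Bs" "D2 \<in> dual_bases E Bs" and x: "x \<in> D1 - D2"
  then obtain B1 B2 where B: "B1 \<in> Bs" "D1 = E - B1" "B2 \<in> Bs" "D2 = E - B2"
    unfolding dual_bases_def by blast
  \<comment> \<open>exchange in the primal through the fundamental circuit of x with respect to B1\<close>
  let ?C = "fund_circuit E Bs B1 x"
  have x': "x \<in> E" "x \<notin> B1" "x \<in> B2"
    using x B by auto
  obtain y where y: "y \<in> ?C" "y \<notin> B2"
    using circuit_not_subset_basis[OF fund_circuit(1)[OF B(1) x'(1,2)] B(3)] by blast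
  then have yB1: "y \<in> B1"
    using fund_circuit(2)[OF B(1) x'(1,2)] x' by blast
  then have "insert x (B1 - {y}) \<in> Bs"
    using basis_change[OF B(1) x'(2) fund_circuit(1,2)[OF B(1) x'(1,2)] y(1)] by blast
  moreover have "insert y (D1 - {x}) = E - insert x (B1 - {y})"
    using B yB1 basis_subset x' by blast
  moreover have "y \<in> D2 - D1"
    using B yB1 basis_subset y by blast
  ultimately show "\<exists>y\<in>D2 - D1. insert y (D1 - {x}) \<in> dual_bases E Bs"
    unfolding dual_bases_def by blast
qed

lemma dual_dual: "dual_bases E (dual_bases E Bs) = Bs"
  unfolding dual_bases_def image_image using basis_subset by (simp add: double_diff)

lemma is_biflat_dual_swap:
  "is_biflat E (dual_bases E Bs) (G, F) \<longleftrightarrow> is_biflat E Bs (F, G)"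
  unfolding is_biflat_def dual_dual by auto

lemma fund_cocircuit_eq_dual: "fund_cocircuit E Bs B i = fund_circuit E (dual_bases E Bs) (E - B) i"
  by (simp add: fund_cocircuit_def fund_circuit_def is_cocircuit_def)

lemma nonbasis_nonempty:
  assumes B: "B \<in> Bs" and x: "x \<in> E" "\<not> is_coloop E Bs x"
  shows "E - B \<noteq> {}"
proof
  assume "E - B = {}"
  then have "card B' = card E" if "B' \<in> Bs" for B'
    using card_bases_eq[OF that B] basis_subset[OF B] by simp
  then have "B' = E" if "B' \<in> Bs" for B'
    using that card_subset_eq[OF finite_ground basis_subset] by blast
  then show False
    using x unfolding is_coloop_def by blast
qed

lemma notin_dual_cl_if_nonbasis:
  assumes "B \<in> Bs" "insert x Y \<subseteq> E - B" "x \<notin> Y"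
  shows "x \<notin> cl E (dual_bases E Bs) Y"
proof -
  interpret dual: matroid E "dual_bases E Bs"
    by (rule matroid_dual)
  have "indep (dual_bases E Bs) (insert x Y)"
    using assms unfolding indep_def dual_bases_def by blast
  then show ?thesis
    using dual.notin_cl_if_indep assms(3) by blast
qed

end

section \<open>Biflags from a flag and a coflag\<close>

context matroid
begin

lemma is_biflat_cl_ground:
  assumes X: "X \<subseteq> E" "X \<noteq> {}" and m: "m \<in> E" "m \<notin> cl E Bs X"
  shows "is_biflat E Bs (cl E Bs X, E)"
proof -
  interpret dual: matroid E "dual_bases E Bs"
    by (rule matroid_dual)
  show ?thesis
    unfolding is_biflat_def
    using is_flat_cl[OF X(1)] dual.is_flat_ground subset_cl[OF X(1)] X(2) m cl_subset_ground
    by auto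
qed

lemma is_biflat_ground_dual_cl:
  assumes "Y \<subseteq> E" "Y \<noteq> {}" "m \<in> E" "m \<notin> cl E (dual_bases E Bs) Y"
  shows "is_biflat E Bs (E, cl E (dual_bases E Bs) Y)"
proof -
  interpret dual: matroid E "dual_bases E Bs"
    by (rule matroid_dual)
  show ?thesis
    using dual.is_biflat_cl_ground[OF assms] is_biflat_dual_swap by simp
qed

lemma is_biflag_flag_coflag:
  fixes e :: "nat \<Rightarrow> 'a" and F G :: "nat \<Rightarrow> 'a set"
  assumes m: "m \<in> E" and e: "e ` {1..N} \<subseteq> E"
    and flag: "\<And>j. 1 \<le> j \<Longrightarrow> j \<le> p \<Longrightarrow> j \<le> N \<Longrightarrow> m \<notin> cl E Bs (e ` {1..j})"
    and coflag: "\<And>j. p < j \<Longrightarrow> j \<le> N \<Longrightarrow> m \<notin> cl E (dual_bases E Bs) (e ` {j..N})"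
    and F_def: "\<And>j. F j = (if j \<le> p then cl E Bs (e ` {1..j}) else E)"
    and G_def: "\<And>j. G j = (if j \<le> p then E else cl E (dual_bases E Bs) (e ` {j..N}))"
  shows "is_biflag E Bs {(F j, G j) | j. 1 \<le> j \<and> j \<le> N}"
proof -
  interpret dual: matroid E "dual_bases E Bs"
    by (rule matroid_dual)
  have biflat: "is_biflat E Bs (F j, G j)" if j: "1 \<le> j" "j \<le> N" for j
  proof (cases "j \<le> p")
    case True
    have "e ` {1..j} \<subseteq> E" "e ` {1..j} \<noteq> {}"
      using e j by auto
    then show ?thesis
      using is_biflat_cl_ground m flag j True F_def G_def by simp
  next
    case False
    have "e ` {j..N} \<subseteq> E" "e ` {j..N} \<noteq> {}"
      using e j by auto
    then show ?thesis
      using is_biflat_ground_dual_cl m coflag j False F_def G_def by simp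
  qed
  have mono: "F i \<subseteq> F j \<and> G j \<subseteq> G i" if "i \<le> j" for i j
    using that cl_mono[of "e ` {1..i}" "e ` {1..j}"] dual.cl_mono[of "e ` {j..N}" "e ` {i..N}"]
      cl_subset_ground dual.cl_subset_ground
    unfolding F_def G_def by (auto simp: image_mono)
  have "m \<notin> F j \<inter> G j" if "1 \<le> j" "j \<le> N" for j
    using that flag coflag F_def G_def by (cases "j \<le> p") auto
  then have "m \<notin> (\<Union>(F, G)\<in>{(F j, G j) | j. 1 \<le> j \<and> j \<le> N}. F \<inter> G)"
    by blast
  moreover have "compatible (F i, G i) (F j, G j)" for i j
    using mono[of i j] mono[of j i] unfolding compatible_def by (cases "i \<le> j") auto
  ultimately show ?thesis
    unfolding is_biflag_def using biflat m by blast
qed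

end

section \<open>The nbc biflag\<close>

locale ordered_matroid = matroid E Bs for E :: "'a::linorder set" and Bs
begin

lemma in_IA_if_less_nonbasis:
  assumes B: "B \<in> Bs" and i: "i \<in> B" and less: "\<And>x. x \<in> E - B \<Longrightarrow> i < x"
  shows "i \<in> IA E Bs B"
proof -
  interpret dual: matroid E "dual_bases E Bs"
    by (rule matroid_dual)
  let ?D = "fund_cocircuit E Bs B i"
  have "E - B \<in> dual_bases E Bs"
    using B unfolding dual_bases_def by blast
  moreover have "i \<in> E"
    using B i basis_subset by blast
  ultimately have D: "?D \<subseteq> insert i (E - B)" "i \<in> ?D"
    using dual.fund_circuit[of "E - B" i] i fund_cocircuit_eq_dual by auto
  moreover have "finite ?D"
    using D(1) finite_ground by (simp add: finite_subset)
  ultimately have "Min ?D = i"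
    using less by (intro Min_eqI) (auto intro: less_imp_le)
  then show ?thesis
    unfolding IA_def using i by simp
qed

lemma nbc_Min_nonbasis_notin_cl:
  assumes nbc: "nbc_basis E Bs B" and X: "X \<subseteq> B - IA E Bs B"
    and nonbasis: "E - B \<noteq> {}"
  shows "Min (E - B) \<notin> cl E Bs X"
proof
  let ?m = "Min (E - B)" and ?C = "fund_circuit E Bs B (Min (E - B))"
  assume m_cl: "?m \<in> cl E Bs X"
  have B: "B \<in> Bs" and EA: "EA E Bs B = {}"
    using nbc unfolding nbc_basis_def by auto
  have m: "?m \<in> E - B" and m_le: "\<And>x. x \<in> E - B \<Longrightarrow> ?m \<le> x"
    using Min_in[OF finite_Diff[OF finite_ground] nonbasis] Min_le[OF finite_Diff[OF finite_ground]]
    by auto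
  have C: "?C \<subseteq> insert ?m X" "?m \<in> ?C"
    using fund_circuit_subset_if_in_cl[OF B _ m_cl] fund_circuit(3)[OF B] X m by auto
  have "finite ?C"
    using C(1) X finite_basis[OF B] by (meson finite_insert finite_subset Diff_subset order_trans)
  then have "Min ?C \<in> ?C" "Min ?C \<le> ?m"
    using Min_in Min_le C(2) by blast+
  moreover have "Min ?C \<noteq> ?m"
    using EA m unfolding EA_def by auto
  ultimately have "Min ?C \<in> X" "Min ?C < ?m"
    using C(1) by auto
  moreover have "Min ?C \<in> IA E Bs B"
    using in_IA_if_less_nonbasis[OF B] X m_le \<open>Min ?C \<in> X\<close> \<open>Min ?C < ?m\<close>
    by (meson DiffD1 less_le_trans subset_iff)
  ultimately show False
    using X by blast
qed

lemma is_biflag_nbc: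
  fixes e :: "nat \<Rightarrow> 'a" and F G :: "nat \<Rightarrow> 'a set"
  assumes nbc: "nbc_basis E Bs B" and nonbasis: "E - B \<noteq> {}"
    and e_flag: "\<And>j. 1 \<le> j \<Longrightarrow> j \<le> p \<Longrightarrow> e j \<in> B - IA E Bs B"
    and e_coflag: "\<And>j. p < j \<Longrightarrow> j \<le> N \<Longrightarrow> e j \<in> E - B - {Min (E - B)}"
    and F_def: "\<And>j. F j = (if j \<le> p then cl E Bs (e ` {1..j}) else E)"
    and G_def: "\<And>j. G j = (if j \<le> p then E else cl E (dual_bases E Bs) (e ` {j..N}))"
  shows "is_biflag E Bs {(F j, G j) | j. 1 \<le> j \<and> j \<le> N}"
proof -
  let ?m = "Min (E - B)"
  have B: "B \<in> Bs"
    using nbc unfolding nbc_basis_def by blast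
  have m: "?m \<in> E - B"
    using Min_in[OF finite_Diff[OF finite_ground] nonbasis] .
  have "e j \<in> E" if "1 \<le> j" "j \<le> N" for j
  proof (cases "j \<le> p")
    case True
    then show ?thesis
      using e_flag[OF that(1)] basis_subset[OF B] by blast
  next
    case False
    then show ?thesis
      using e_coflag[of j] that by simp
  qed
  then have e_ground: "e ` {1..N} \<subseteq> E"
    by auto
  have flag: "?m \<notin> cl E Bs (e ` {1..j})" if "1 \<le> j" "j \<le> p" for j
  proof -
    have "e ` {1..j} \<subseteq> B - IA E Bs B"
      using that by (intro image_subsetI e_flag) auto
    then show ?thesis
      by (rule nbc_Min_nonbasis_notin_cl[OF nbc _ nonbasis])
  qed
  have coflag: "?m \<notin> cl E (dual_bases E Bs) (e ` {j..N})" if "p < j" "j \<le> N" for j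
  proof -
    have "e ` {j..N} \<subseteq> E - B - {?m}"
      using that by (intro image_subsetI e_coflag) auto
    then have "insert ?m (e ` {j..N}) \<subseteq> E - B" "?m \<notin> e ` {j..N}"
      using m by auto
    then show ?thesis
      by (rule notin_dual_cl_if_nonbasis[OF B])
  qed
  show ?thesis
    using is_biflag_flag_coflag[OF _ e_ground flag coflag F_def G_def] m by blast
qed

end

theorem mainTheorem4:
  fixes n r k :: nat and Bs :: "nat set set" and B :: "nat set"
    and e :: "nat \<Rightarrow> nat" and F G :: "nat \<Rightarrow> nat set"
  defines "E \<equiv> {0..n}"
  assumes M: "matroid_bases E Bs"
    and rank: "\<forall>B'\<in>Bs. card B' = r + 1"
    and noloop: "\<forall>x\<in>E. \<not> is_loop E Bs x"
    and nocoloop: "\<forall>x\<in>E. \<not> is_coloop E Bs x"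
    and nbc: "nbc_basis E Bs B"
    and cardIA: "card (IA E Bs B) = k + 1"
    and e_def: "\<And>j. e j = (if j \<le> r - k
                   then rev (sorted_list_of_set (B - IA E Bs B)) ! (j - 1)
                   else sorted_list_of_set ((E - B) - {Min (E - B)}) ! (j - (r - k) - 1))"
    and F_def: "\<And>j. F j = (if j \<le> r - k then cl E Bs (e ` {1..j}) else E)"
    and G_def: "\<And>j. G j = (if j \<le> r - k then E
                   else cl E (dual_bases E Bs) (e ` {j..n - k - 1}))"
  shows "is_biflag E Bs {(F j, G j) | j. 1 \<le> j \<and> j \<le> n - k - 1}"
proof -
  interpret ordered_matroid E Bs
    using M by unfold_locales
  have B: "B \<in> Bs"
    using nbc unfolding nbc_basis_def by blast
  have nonbasis: "E - B \<noteq> {}"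
    using nonbasis_nonempty[OF B, of 0] nocoloop unfolding E_def by simp
  have card_B: "card B = r + 1" and IA_B: "IA E Bs B \<subseteq> B"
    using rank B unfolding IA_def by auto
  then have card_flag: "card (B - IA E Bs B) = r - k"
    using cardIA finite_basis[OF B] by (simp add: card_Diff_subset finite_subset)
  have card_coflag: "card (E - B - {Min (E - B)}) = n - r - 1"
    using Min_in[OF finite_Diff[OF finite_ground] nonbasis] card_B basis_subset[OF B]
      finite_basis[OF B] unfolding E_def by (simp add: card_Diff_subset)
  have k_le_r: "k \<le> r"
    using card_mono[OF finite_basis[OF B] IA_B] cardIA card_B by simp
  show ?thesis
  proof (rule is_biflag_nbc[OF nbc nonbasis _ _ F_def G_def])
    show "e j \<in> B - IA E Bs B" if "1 \<le> j" "j \<le> r - k" for j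
      using nth_rev_sorted_list_of_set_mem[of "B - IA E Bs B" "j - 1"] that e_def[of j] card_flag
        finite_basis[OF B] by simp
    show "e j \<in> E - B - {Min (E - B)}" if "r - k < j" "j \<le> n - k - 1" for j
      using nth_sorted_list_of_set_mem[of "E - B - {Min (E - B)}" "j - (r - k) - 1"] that e_def[of j]
        card_coflag k_le_r finite_ground by simp
  qed
qed

end
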